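(* Let $(A,m,\Delta)$ be an infinitesimal multiplier bialgebra (see context), and write $[x,y]=xy-yx$ for $x,y\in A$. For $a\in A$ define linear maps $\delta_a,\zeta^a:A\to A\otimes A$ by $$\delta_a(x)=\Delta(x)(a\otimes 1)-\tau\big(\Delta(x)(a\otimes 1)\big),\qquad \zeta^a(x)=(1\otimes a)\Delta(x)-\tau\big((1\otimes a)\Delta(x)\big),$$ where $\tau$ is the flip $u\otimes v\mapsto v\otimes u$. Then for all $a,x,y\in A$, $$\delta_a[x,y]=x\cdot\delta_a(y)-y\cdot\delta_a(x)+\underline{\mathbb B}(a)(x\otimes y)-\underline{\mathbb B}(a)(y\otimes x),$$ $$\zeta^a[x,y]=x\cdot\zeta^a(y)-y\cdot\zeta^a(x)+\overline{\mathbb B}(a)(x\otimes y)-\overline{\mathbb B}(a)(y\otimes x),$$ where $x\cdot(u\otimes v)=[x,u]\otimes v+u\otimes[x,v]$ for $u,v\in A$ (extended linearly), and $\underline{\mathbb B}(a),\overline{\mathbb B}(a)$ are the linear endomorphisms of $A\otimes A$ given by $$\underline{\mathbb B}(a)(x\otimes y)=(x\otimes 1)\,\tau\big(\Delta(y)(a\otimes 1)\big)-\tau\big(\Delta(y)(ax\otimes 1)\big)+(1\otimes y)\big(\Delta(x)(a\otimes 1)\big)-\Delta(x)(ay\otimes 1),$$ $$\overline{\mathbb B}(a)(x\otimes y)=\tau\big((1\otimes xa)\Delta(y)\big)-\tau\big(((1\otimes a)\Delta(y))(x\otimes 1)\big)+(1\otimes ya)\Delta(x)-\big((1\otimes a)\Delta(x)\big)(y\otimes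 1).$$
   Context: All algebras are associative $\mathbb C$-algebras, not necessarily unital, whose product is non-degenerate (if $ab=0$ for all $b$ then $a=0$, and if $ba=0$ for all $b$ then $a=0$). For such an algebra $B$, a left multiplier is a linear $\lambda:B\to B$ with $\lambda(bc)=\lambda(b)c$, a right multiplier is a linear $\rho:B\to B$ with $\rho(bc)=b\rho(c)$, and the multiplier algebra $M(B)$ consists of pairs $(\lambda,\rho)$ of a left and a right multiplier with $b\lambda(c)=\rho(b)c$ for all $b,c$; its product is $(\lambda,\rho)(\lambda',\rho')=(\lambda\circ\lambda',\rho'\circ\rho)$, it has identity $(\mathrm{id},\mathrm{id})$, and $B$ embeds in $M(B)$ via $b\mapsto(\lambda_b,\rho_b)$, $\lambda_b(c)=bc$, $\rho_b(c)=cb$. A coproduct on $A$ is a linear map $\Delta:A\to M(A\otimes A)$ such that (a) $\Delta(b)(a\otimes 1)\in A\otimes A$ and $(1\otimes b)\Delta(a)\in A\otimes A$ for all $a,b\in A$, and (b) with $T_3(a\otimes b)=\Delta(b)(a\otimes 1)$ and $T_4(a\otimes b)=(1\otimes b)\Delta(a)$, one has $(\iota\otimes T_4)\circ(T_3\otimes\iota)=(T_3\otimes\iota)\circ(\iota\otimes T_4)$ on $A\otimes A\otimes A$ ($\iota$ the identity). An infinitesimal multiplier bialgebra is a triple $(A,m,\Delta)$ with $(A,m)$ an associative algebra with non-degenerate product, $\Delta$ a coproduct on $A$, and $\Delta(ab)=\Delta(a)(1\otimes b)+(a\otimes 1)\Delta(b)$ in $M(A\otimes A)$ for all $a,b\in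 A$. Expressions such as $(x\otimes 1)\,\tau(w)$ or $w(y\otimes 1)$ with $w\in A\otimes A$ are products in the algebra $A\otimes A$. The pair $\mathbb B(a)=(\underline{\mathbb B}(a),\overline{\mathbb B}(a))$ is called the bibalanceator of $A$. *)

theory Defs
  imports "HOL-Analysis.Analysis"
begin

definition complex_algebra :: "(complex \<Rightarrow> 'a::ring \<Rightarrow> 'a) \<Rightarrow> bool" where
  "complex_algebra sc \<longleftrightarrow> vector_space sc \<and>
     (\<forall>c x y. sc c (x * y) = sc c x * y) \<and> (\<forall>c x y. sc c (x * y) = x * sc c y)"

definition nondegenerate_product :: "'a::ring itself \<Rightarrow> bool" where
  "nondegenerate_product _ \<longleftrightarrow>
     (\<forall>a::'a. (\<forall>b. a * b = 0) \<longrightarrow> a = 0) \<and> (\<forall>a::'a. (\<forall>b. b * a = 0) \<longrightarrow> a = 0)"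

text \<open>This characterises the algebraic tensor product up to unique isomorphism.\<close>
definition is_tensor_product ::
  "(complex \<Rightarrow> 'u::ab_group_add \<Rightarrow> 'u) \<Rightarrow> (complex \<Rightarrow> 'v::ab_group_add \<Rightarrow> 'v)
   \<Rightarrow> (complex \<Rightarrow> 't::ab_group_add \<Rightarrow> 't) \<Rightarrow> ('u \<Rightarrow> 'v \<Rightarrow> 't) \<Rightarrow> bool" where
  "is_tensor_product sU sV sT tp \<longleftrightarrow>
     vector_space sU \<and> vector_space sV \<and> vector_space sT \<and>
     (\<forall>u u' v. tp (u + u') v = tp u v + tp u' v) \<and>
     (\<forall>u v v'. tp u (v + v') = tp u v + tp u v') \<and>
     (\<forall>c u v. tp (sU c u) v = sT c (tp u v)) \<and>
     (\<forall>c u v. tp u (sV c v) = sT c (tp u v)) \<and>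
     module.span sT {tp u v | u v. True} = UNIV \<and>
     (\<forall>(n::nat) xs ys. inj_on xs {..<n} \<and> \<not> module.dependent sU (xs ` {..<n}) \<and>
        (\<Sum>i<n. tp (xs i) (ys i)) = 0 \<longrightarrow> (\<forall>i<n. ys i = 0))"

definition tlin ::
  "(complex \<Rightarrow> 't::ab_group_add \<Rightarrow> 't) \<Rightarrow> (complex \<Rightarrow> 'w::ab_group_add \<Rightarrow> 'w)
   \<Rightarrow> ('u \<Rightarrow> 'v \<Rightarrow> 't) \<Rightarrow> ('u \<Rightarrow> 'v \<Rightarrow> 'w) \<Rightarrow> 't \<Rightarrow> 'w" where
  "tlin sT sW tp F = (THE h. Vector_Spaces.linear sT sW h \<and> (\<forall>u v. h (tp u v) = F u v))"

definition flip :: "(complex \<Rightarrow> 't::ab_group_add \<Rightarrow> 't) \<Rightarrow> ('a \<Rightarrow> 'a \<Rightarrow> 't) \<Rightarrow> 't \<Rightarrow> 't" where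
  "flip sT tp = tlin sT sT tp (\<lambda>u v. tp v u)"

section \<open>Multiplier algebra M(B) of an algebra B, as pairs (lambda, rho)\<close>

type_synonym 't mult = "('t \<Rightarrow> 't) \<times> ('t \<Rightarrow> 't)"

definition is_multiplier :: "(complex \<Rightarrow> 't::ring \<Rightarrow> 't) \<Rightarrow> 't mult \<Rightarrow> bool" where
  "is_multiplier sT m \<longleftrightarrow>
     Vector_Spaces.linear sT sT (fst m) \<and> Vector_Spaces.linear sT sT (snd m) \<and>
     (\<forall>b c. fst m (b * c) = fst m b * c) \<and>
     (\<forall>b c. snd m (b * c) = b * snd m c) \<and>
     (\<forall>b c. b * fst m c = snd m b * c)"

definition mprod :: "'t mult \<Rightarrow> 't mult \<Rightarrow> 't mult" where
  "mprod m m' = (fst m \<circ> fst m', snd m' \<circ> snd m)"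

definition madd :: "'t::plus mult \<Rightarrow> 't mult \<Rightarrow> 't mult" where
  "madd m m' = (\<lambda>w. fst m w + fst m' w, \<lambda>w. snd m w + snd m' w)"

definition membed :: "'t::times \<Rightarrow> 't mult" where
  "membed b = ((\<lambda>c. b * c), (\<lambda>c. c * b))"

text \<open>For a multiplier lying in (the image of) B, the corresponding element of B.\<close>
definition melem :: "'t::times mult \<Rightarrow> 't" where
  "melem m = (THE w. membed w = m)"

section \<open>The multipliers a (x) 1 and 1 (x) b of A (x) A\<close>

definition ten_one :: "(complex \<Rightarrow> 't::ab_group_add \<Rightarrow> 't) \<Rightarrow> ('a::times \<Rightarrow> 'a \<Rightarrow> 't) \<Rightarrow> 'a \<Rightarrow> 't mult" where
  "ten_one sT tp a = (tlin sT sT tp (\<lambda>u v. tp (a * u) v), tlin sT sT tp (\<lambda>u v. tp (u * a) v))"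

definition one_ten :: "(complex \<Rightarrow> 't::ab_group_add \<Rightarrow> 't) \<Rightarrow> ('a::times \<Rightarrow> 'a \<Rightarrow> 't) \<Rightarrow> 'a \<Rightarrow> 't mult" where
  "one_ten sT tp b = (tlin sT sT tp (\<lambda>u v. tp u (b * v)), tlin sT sT tp (\<lambda>u v. tp u (v * b)))"

text \<open>Delta(x)(a (x) 1) and (1 (x) a) Delta(x), as elements of A (x) A.\<close>
definition DeltaR :: "(complex \<Rightarrow> 't::ring \<Rightarrow> 't) \<Rightarrow> ('a::times \<Rightarrow> 'a \<Rightarrow> 't)
    \<Rightarrow> ('a \<Rightarrow> 't mult) \<Rightarrow> 'a \<Rightarrow> 'a \<Rightarrow> 't" where
  "DeltaR sT tp \<Delta> x a = melem (mprod (\<Delta> x) (ten_one sT tp a))"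

definition DeltaL :: "(complex \<Rightarrow> 't::ring \<Rightarrow> 't) \<Rightarrow> ('a::times \<Rightarrow> 'a \<Rightarrow> 't)
    \<Rightarrow> ('a \<Rightarrow> 't mult) \<Rightarrow> 'a \<Rightarrow> 'a \<Rightarrow> 't" where
  "DeltaL sT tp \<Delta> a x = melem (mprod (one_ten sT tp a) (\<Delta> x))"

definition T3 where
  "T3 sA sT tp \<Delta> = tlin sT sT tp (\<lambda>a b. DeltaR sT tp \<Delta> b a)"

definition T4 where
  "T4 sA sT tp \<Delta> = tlin sT sT tp (\<lambda>a b. DeltaL sT tp \<Delta> b a)"

text \<open>A (x) A (x) A is realised as (A (x) A) (x) A via tp3.
  T3 (x) iota and iota (x) T4 on it:\<close>
definition T3_id where
  "T3_id sA sT sS tp tp3 \<Delta> = tlin sS sS tp3 (\<lambda>w c. tp3 (T3 sA sT tp \<Delta> w) c)"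

definition id_T4 where
  "id_T4 sA sT sS tp tp3 \<Delta> =
     tlin sS sS tp3 (\<lambda>w c. tlin sT sS tp
        (\<lambda>a b. tlin sT sS tp (\<lambda>u v. tp3 (tp a u) v) (T4 sA sT tp \<Delta> (tp b c))) w)"

definition is_coproduct ::
  "(complex \<Rightarrow> 'a::ring \<Rightarrow> 'a) \<Rightarrow> (complex \<Rightarrow> 't::ring \<Rightarrow> 't) \<Rightarrow> (complex \<Rightarrow> 's::ab_group_add \<Rightarrow> 's)
   \<Rightarrow> ('a \<Rightarrow> 'a \<Rightarrow> 't) \<Rightarrow> ('t \<Rightarrow> 'a \<Rightarrow> 's) \<Rightarrow> ('a \<Rightarrow> 't mult) \<Rightarrow> bool" where
  "is_coproduct sA sT sS tp tp3 \<Delta> \<longleftrightarrow>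
     (\<forall>x. is_multiplier sT (\<Delta> x)) \<and>
     (\<forall>c x y. \<Delta> (sA c x + y) =
        (\<lambda>w. sT c (fst (\<Delta> x) w) + fst (\<Delta> y) w, \<lambda>w. sT c (snd (\<Delta> x) w) + snd (\<Delta> y) w)) \<and>
     (\<forall>a b. mprod (\<Delta> b) (ten_one sT tp a) \<in> range membed) \<and>
     (\<forall>a b. mprod (one_ten sT tp b) (\<Delta> a) \<in> range membed) \<and>
     id_T4 sA sT sS tp tp3 \<Delta> \<circ> T3_id sA sT sS tp tp3 \<Delta> =
       T3_id sA sT sS tp tp3 \<Delta> \<circ> id_T4 sA sT sS tp tp3 \<Delta>"

text \<open>Here tp : A x A -> T is
  the tensor product A (x) A (T carrying the algebra structure with
  (a (x) b)(c (x) d) = ac (x) bd), and tp3 : T x A -> S realises A (x) A (x) A.\<close>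
definition inf_mult_bialgebra ::
  "(complex \<Rightarrow> 'a::ring \<Rightarrow> 'a) \<Rightarrow> (complex \<Rightarrow> 't::ring \<Rightarrow> 't) \<Rightarrow> (complex \<Rightarrow> 's::ab_group_add \<Rightarrow> 's)
   \<Rightarrow> ('a \<Rightarrow> 'a \<Rightarrow> 't) \<Rightarrow> ('t \<Rightarrow> 'a \<Rightarrow> 's) \<Rightarrow> ('a \<Rightarrow> 't mult) \<Rightarrow> bool" where
  "inf_mult_bialgebra sA sT sS tp tp3 \<Delta> \<longleftrightarrow>
     complex_algebra sA \<and> nondegenerate_product TYPE('a) \<and>
     is_tensor_product sA sA sT tp \<and> complex_algebra sT \<and>
     (\<forall>a b c d. tp a b * tp c d = tp (a * c) (b * d)) \<and>
     is_tensor_product sT sA sS tp3 \<and>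
     is_coproduct sA sT sS tp tp3 \<Delta> \<and>
     (\<forall>a b. \<Delta> (a * b) = madd (mprod (\<Delta> a) (one_ten sT tp b)) (mprod (ten_one sT tp a) (\<Delta> b)))"

definition commutator :: "'a::ring \<Rightarrow> 'a \<Rightarrow> 'a" where
  "commutator x y = x * y - y * x"

definition dot_act :: "(complex \<Rightarrow> 't::ab_group_add \<Rightarrow> 't) \<Rightarrow> ('a::ring \<Rightarrow> 'a \<Rightarrow> 't) \<Rightarrow> 'a \<Rightarrow> 't \<Rightarrow> 't" where
  "dot_act sT tp x = tlin sT sT tp (\<lambda>u v. tp (commutator x u) v + tp u (commutator x v))"

definition delta_map where
  "delta_map sT tp \<Delta> a x = DeltaR sT tp \<Delta> x a - flip sT tp (DeltaR sT tp \<Delta> x a)"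

definition zeta_map where
  "zeta_map sT tp \<Delta> a x = DeltaL sT tp \<Delta> a x - flip sT tp (DeltaL sT tp \<Delta> a x)"

definition bibal_under where
  "bibal_under sT tp \<Delta> a = tlin sT sT tp (\<lambda>x y.
      fst (ten_one sT tp x) (flip sT tp (DeltaR sT tp \<Delta> y a))
    - flip sT tp (DeltaR sT tp \<Delta> y (a * x))
    + fst (one_ten sT tp y) (DeltaR sT tp \<Delta> x a)
    - DeltaR sT tp \<Delta> x (a * y))"

definition bibal_over where
  "bibal_over sT tp \<Delta> a = tlin sT sT tp (\<lambda>x y.
      flip sT tp (DeltaL sT tp \<Delta> (x * a) y)
    - flip sT tp (snd (ten_one sT tp x) (DeltaL sT tp \<Delta> a y))
    + DeltaL sT tp \<Delta> (y * a) x
    - snd (ten_one sT tp y) (DeltaL sT tp \<Delta> a x))"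

end

theory Submission
  imports Defs
begin

text \<open>
  Both \<open>x \<mapsto> \<Delta>(x)(a \<otimes> 1)\<close> and \<open>x \<mapsto> (1 \<otimes> a)\<Delta>(x)\<close> are maps
  \<open>D : A \<rightarrow> A \<otimes> A\<close> obeying the twisted Leibniz rule \<open>D(xy) = D(x)(1 \<otimes> y) + (x \<otimes> 1)D(y)\<close>:
  this is the infinitesimal compatibility of \<open>\<Delta>\<close>, transported from multipliers to elements of
  \<open>A \<otimes> A\<close>, which is legitimate because the product of \<open>A \<otimes> A\<close> is nondegenerate.
  For any such \<open>D\<close>, expand \<open>D[x,y]\<close> by the Leibniz rule, antisymmetrise with the flip \<open>\<tau>\<close>, and
  write the action \<open>x\<cdot>t\<close> as \<open>(x \<otimes> 1)t - t(x \<otimes> 1) + (1 \<otimes> x)t - t(1 \<otimes> x)\<close>; since \<open>\<tau>\<close> exchanges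
  multiplication by \<open>x \<otimes> 1\<close> and by \<open>1 \<otimes> x\<close>, what is left over is exactly the bibalanceator term.
\<close>

section \<open>Tensor products\<close>

definition bilinear_map ::
  "(complex \<Rightarrow> 'u::ab_group_add \<Rightarrow> 'u) \<Rightarrow> (complex \<Rightarrow> 'v::ab_group_add \<Rightarrow> 'v)
   \<Rightarrow> (complex \<Rightarrow> 'w::ab_group_add \<Rightarrow> 'w) \<Rightarrow> ('u \<Rightarrow> 'v \<Rightarrow> 'w) \<Rightarrow> bool" where
  "bilinear_map sU sV sW F \<longleftrightarrow>
     (\<forall>v. Vector_Spaces.linear sU sW (\<lambda>u. F u v)) \<and> (\<forall>u. Vector_Spaces.linear sV sW (F u))"

lemma bilinear_mapI:
  assumes "vector_space sU" "vector_space sV" "vector_space sW"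
    and "\<And>u u' v. F (u + u') v = F u v + F u' v" "\<And>u v v'. F u (v + v') = F u v + F u v'"
    and "\<And>c u v. F (sU c u) v = sW c (F u v)" "\<And>c u v. F u (sV c v) = sW c (F u v)"
  shows "bilinear_map sU sV sW F"
  unfolding bilinear_map_def Vector_Spaces.linear_iff using assms by auto

lemma (in module) sum_representation_superset:
  assumes "independent B" "v \<in> span B" "finite S" "{b. representation B v b \<noteq> 0} \<subseteq> S"
  shows "(\<Sum>b\<in>S. representation B v b *s b) = v"
proof -
  have "(\<Sum>b\<in>S. representation B v b *s b) =
      (\<Sum>b\<in>{b. representation B v b \<noteq> 0}. representation B v b *s b)"
    by (rule sum.mono_neutral_right) (use assms in auto)
  also have "\<dots> = v"
    using assms(1,2) by (rule sum_nonzero_representation_eq)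
  finally show ?thesis .
qed

locale tensor_product =
  fixes sU :: "complex \<Rightarrow> 'u::ab_group_add \<Rightarrow> 'u" and sV :: "complex \<Rightarrow> 'v::ab_group_add \<Rightarrow> 'v"
    and sT :: "complex \<Rightarrow> 't::ab_group_add \<Rightarrow> 't" and tp :: "'u \<Rightarrow> 'v \<Rightarrow> 't"
  assumes tensor_product: "is_tensor_product sU sV sT tp"

sublocale tensor_product \<subseteq> U: vector_space sU
  using tensor_product unfolding is_tensor_product_def by auto
sublocale tensor_product \<subseteq> V: vector_space sV
  using tensor_product unfolding is_tensor_product_def by auto
sublocale tensor_product \<subseteq> T: vector_space sT
  using tensor_product unfolding is_tensor_product_def by auto
sublocale tensor_product \<subseteq> UT: vector_space_pair sU sT
  using tensor_product unfolding is_tensor_product_def vector_space_pair_def by auto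
sublocale tensor_product \<subseteq> VT: vector_space_pair sV sT
  using tensor_product unfolding is_tensor_product_def vector_space_pair_def by auto
sublocale tensor_product \<subseteq> TT: vector_space_pair sT sT
  using tensor_product unfolding is_tensor_product_def vector_space_pair_def by auto

context tensor_product
begin

abbreviation "U_basis \<equiv> U.extend_basis {}"
abbreviation "V_basis \<equiv> V.extend_basis {}"

lemma independent_U_basis: "U.independent U_basis"
  and span_U_basis: "U.span U_basis = UNIV"
  using U.independent_extend_basis[OF U.independent_empty] U.span_extend_basis[OF U.independent_empty] by auto

lemma independent_V_basis: "V.independent V_basis"
  and span_V_basis: "V.span V_basis = UNIV"
  using V.independent_extend_basis[OF V.independent_empty] V.span_extend_basis[OF V.independent_empty] by auto

lemma linear_tp_left: "Vector_Spaces.linear sU sT (\<lambda>u. tp u v)"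
  and linear_tp_right: "Vector_Spaces.linear sV sT (tp u)"
  using tensor_product unfolding is_tensor_product_def Vector_Spaces.linear_iff by auto

lemma span_tp: "T.span {tp u v | u v. True} = UNIV"
  using tensor_product unfolding is_tensor_product_def by auto

lemmas tp_add_left = UT.linear_add[OF linear_tp_left]
  and tp_diff_left = UT.linear_diff[OF linear_tp_left]
  and tp_scale_left = UT.linear_scale[OF linear_tp_left]
  and tp_sum_left = UT.linear_sum[OF linear_tp_left]
  and tp_add_right = VT.linear_add[OF linear_tp_right]
  and tp_diff_right = VT.linear_diff[OF linear_tp_right]
  and tp_scale_right = VT.linear_scale[OF linear_tp_right]
  and tp_sum_right = VT.linear_sum[OF linear_tp_right]
  and tp_zero_right[simp] = VT.linear_0[OF linear_tp_right]

lemma sum_tp_eq_0_left: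
  assumes S: "finite S" "U.independent S" and sum: "(\<Sum>b\<in>S. tp b (y b)) = 0" and b: "b \<in> S"
  shows "y b = 0"
proof -
  obtain n :: nat and f where f: "S = f ` {i. i < n}" "inj_on f {i. i < n}"
    using finite_imp_nat_seg_image_inj_on[OF S(1)] by blast
  then have img: "f ` {..<n} = S" and inj: "inj_on f {..<n}"
    by (simp_all add: lessThan_def)
  have sum_reindexed: "(\<Sum>i<n. tp (f i) ((y \<circ> f) i)) = 0"
    using sum sum.reindex[OF inj, of "\<lambda>b. tp b (y b)"] img by simp
  have ind: "U.independent (f ` {..<n})"
    using S(2) img by simp
  have "\<forall>(n::nat) xs ys. inj_on xs {..<n} \<and> U.independent (xs ` {..<n}) \<and>
      (\<Sum>i<n. tp (xs i) (ys i)) = 0 \<longrightarrow> (\<forall>i<n. ys i = 0)"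
    using tensor_product unfolding is_tensor_product_def by blast
  then have "(y \<circ> f) i = 0" if "i < n" for i
    using inj ind sum_reindexed that by blast
  moreover obtain i where "i < n" "b = f i"
    using b img by blast
  ultimately show ?thesis
    by simp
qed

lemma sum_tp_eq_0_right:
  assumes S: "finite S" "V.independent S" and sum: "(\<Sum>c\<in>S. tp (z c) c) = 0" and c: "c \<in> S"
  shows "z c = 0"
proof -
  let ?r = "\<lambda>c. U.representation U_basis (z c)"
  define K where "K = (\<Union>c\<in>S. {b. ?r c b \<noteq> 0})"
  have "K \<subseteq> U_basis"
    unfolding K_def using U.representation_ne_zero by blast
  then have K: "finite K" "U.independent K"
    using U.independent_mono[OF independent_U_basis]
    unfolding K_def using S(1) U.finite_representation by auto
  have z: "z c = (\<Sum>b\<in>K. sU (?r c b) b)" if "c \<in> S" for c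
    by (rule U.sum_representation_superset[symmetric])
       (use that K in \<open>auto simp: K_def independent_U_basis span_U_basis\<close>)
  have "tp (z c) c = (\<Sum>b\<in>K. tp b (sV (?r c b) c))" if "c \<in> S" for c
    by (subst z[OF that]) (simp add: tp_sum_left tp_scale_left tp_scale_right)
  then have "0 = (\<Sum>c\<in>S. \<Sum>b\<in>K. tp b (sV (?r c b) c))"
    unfolding sum[symmetric] by simp
  also have "\<dots> = (\<Sum>b\<in>K. tp b (\<Sum>c\<in>S. sV (?r c b) c))"
    by (simp add: sum.swap[of _ S] tp_sum_right)
  finally have sum_K: "(\<Sum>b\<in>K. tp b (\<Sum>c\<in>S. sV (?r c b) c)) = 0"
    by simp
  have "?r c b = 0" if "b \<in> K" for b
    using V.independentD[OF S(2) S(1) order_refl sum_tp_eq_0_left[OF K sum_K that] c] .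
  then show ?thesis
    using z[OF c] by simp
qed

text \<open>
  The tensor product is only characterised abstractly, so linear maps out of it are built
  from the unique expansion \<open>t = \<Sum>\<^sub>b b \<otimes> y(b)\<close> over a basis of the first factor.
\<close>

definition has_coords :: "'t \<Rightarrow> ('u \<Rightarrow> 'v) \<Rightarrow> bool" where
  "has_coords t y \<longleftrightarrow> finite {b. y b \<noteq> 0} \<and> {b. y b \<noteq> 0} \<subseteq> U_basis \<and>
     t = (\<Sum>b | y b \<noteq> 0. tp b (y b))"

definition coords :: "'t \<Rightarrow> 'u \<Rightarrow> 'v" where
  "coords t = (THE y. has_coords t y)"

lemma has_coords_sum:
  assumes "has_coords t y" "finite S" "{b. y b \<noteq> 0} \<subseteq> S"
  shows "t = (\<Sum>b\<in>S. tp b (y b))"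
  using assms unfolding has_coords_def by (auto intro: sum.mono_neutral_left)

lemma has_coordsI:
  assumes "finite S" "S \<subseteq> U_basis" "\<And>b. b \<notin> S \<Longrightarrow> y b = 0" "t = (\<Sum>b\<in>S. tp b (y b))"
  shows "has_coords t y"
proof -
  have supp: "{b. y b \<noteq> 0} \<subseteq> S"
    using assms(3) by blast
  then have "(\<Sum>b | y b \<noteq> 0. tp b (y b)) = (\<Sum>b\<in>S. tp b (y b))"
    by (intro sum.mono_neutral_left) (use assms in auto)
  then show ?thesis
    unfolding has_coords_def using assms supp finite_subset by auto
qed

lemma has_coords_unique:
  assumes "has_coords t y" "has_coords t y'"
  shows "y = y'"
proof
  fix b
  let ?S = "{b. y b \<noteq> 0} \<union> {b. y' b \<noteq> 0}"
  have S: "finite ?S" "U.independent ?S"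
    using assms U.independent_mono[OF independent_U_basis] unfolding has_coords_def by auto
  have "(\<Sum>b\<in>?S. tp b (y b - y' b)) = 0"
    using has_coords_sum[OF assms(1) S(1)] has_coords_sum[OF assms(2) S(1)]
    by (simp add: tp_diff_right sum_subtractf)
  then show "y b = y' b"
    using sum_tp_eq_0_left[OF S, of "\<lambda>b. y b - y' b" b] by (cases "b \<in> ?S") auto
qed

lemma has_coords_zero: "has_coords 0 (\<lambda>b. 0)"
  unfolding has_coords_def by simp

lemma has_coords_add:
  assumes "has_coords t y" "has_coords t' y'"
  shows "has_coords (t + t') (\<lambda>b. y b + y' b)"
proof -
  let ?S = "{b. y b \<noteq> 0} \<union> {b. y' b \<noteq> 0}"
  have S: "finite ?S" "?S \<subseteq> U_basis"
    using assms unfolding has_coords_def by auto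
  show ?thesis
  proof (rule has_coordsI[OF S])
    show "t + t' = (\<Sum>b\<in>?S. tp b (y b + y' b))"
      using has_coords_sum[OF assms(1) S(1)] has_coords_sum[OF assms(2) S(1)]
      by (simp add: tp_add_right sum.distrib)
  qed auto
qed

lemma has_coords_scale:
  assumes "has_coords t y"
  shows "has_coords (sT c t) (\<lambda>b. sV c (y b))"
proof -
  let ?S = "{b. y b \<noteq> 0}"
  have S: "finite ?S" "?S \<subseteq> U_basis"
    using assms unfolding has_coords_def by auto
  show ?thesis
  proof (rule has_coordsI[OF S])
    show "sT c t = (\<Sum>b\<in>?S. tp b (sV c (y b)))"
      using has_coords_sum[OF assms S(1)] by (simp add: tp_scale_right T.scale_sum_right)
  qed auto
qed

lemma has_coords_tp: "has_coords (tp u v) (\<lambda>b. sV (U.representation U_basis u b) v)"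
proof -
  let ?r = "U.representation U_basis u" let ?S = "{b. ?r b \<noteq> 0}"
  have "tp u v = tp (\<Sum>b\<in>?S. sU (?r b) b) v"
    using U.sum_nonzero_representation_eq[OF independent_U_basis] span_U_basis by simp
  then show ?thesis
    by (intro has_coordsI[of ?S])
       (auto simp: U.finite_representation U.representation_ne_zero tp_sum_left tp_scale_left tp_scale_right)
qed

lemma has_coords_exists: "\<exists>y. has_coords t y"
proof -
  have "t \<in> T.span {tp u v | u v. True}"
    using span_tp by simp
  then show ?thesis
  proof (induct rule: T.span_induct)
    case base
    show ?case
      unfolding T.subspace_def using has_coords_zero has_coords_add has_coords_scale by blast
  qed (use has_coords_tp in blast)
qed

lemma coords_eqI: "has_coords t y \<Longrightarrow> coords t = y"
  unfolding coords_def using has_coords_unique by blast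

lemma has_coords_coords: "has_coords t (coords t)"
  using has_coords_exists coords_eqI by metis

lemma finite_coords: "finite {b. coords t b \<noteq> 0}"
  using has_coords_coords unfolding has_coords_def by blast

lemma coords_add: "coords (t + t') = (\<lambda>b. coords t b + coords t' b)"
  by (rule coords_eqI) (intro has_coords_add has_coords_coords)

lemma coords_scale: "coords (sT c t) = (\<lambda>b. sV c (coords t b))"
  by (rule coords_eqI) (intro has_coords_scale has_coords_coords)

lemma coords_tp: "coords (tp u v) = (\<lambda>b. sV (U.representation U_basis u b) v)"
  by (rule coords_eqI) (rule has_coords_tp)

definition tensor_lift :: "('u \<Rightarrow> 'v \<Rightarrow> 'w::ab_group_add) \<Rightarrow> 't \<Rightarrow> 'w" where
  "tensor_lift F t = (\<Sum>b\<in>{b. coords t b \<noteq> 0}. F b (coords t b))"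

context
  fixes sW :: "complex \<Rightarrow> 'w::ab_group_add \<Rightarrow> 'w" and F :: "'u \<Rightarrow> 'v \<Rightarrow> 'w"
  assumes F: "bilinear_map sU sV sW F"
begin

interpretation W: vector_space sW
  using F unfolding bilinear_map_def Vector_Spaces.linear_iff by blast

interpretation F_left: Vector_Spaces.linear sU sW "\<lambda>u. F u v" for v
  using F unfolding bilinear_map_def by blast

interpretation F_right: Vector_Spaces.linear sV sW "F u" for u
  using F unfolding bilinear_map_def by blast

lemma tensor_lift_sum:
  assumes "finite S" "{b. coords t b \<noteq> 0} \<subseteq> S"
  shows "tensor_lift F t = (\<Sum>b\<in>S. F b (coords t b))"
  unfolding tensor_lift_def by (rule sum.mono_neutral_left) (use assms in auto)

lemma linear_tensor_lift: "Vector_Spaces.linear sT sW (tensor_lift F)"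
proof -
  have "tensor_lift F (t + t') = tensor_lift F t + tensor_lift F t'" for t t'
  proof -
    let ?S = "{b. coords t b \<noteq> 0} \<union> {b. coords t' b \<noteq> 0}"
    have S: "finite ?S"
      using finite_coords by blast
    have "tensor_lift F (t + t') = (\<Sum>b\<in>?S. F b (coords (t + t') b))"
      by (rule tensor_lift_sum[OF S]) (auto simp: coords_add)
    also have "\<dots> = (\<Sum>b\<in>?S. F b (coords t b)) + (\<Sum>b\<in>?S. F b (coords t' b))"
      by (simp add: coords_add F_right.add sum.distrib)
    also have "\<dots> = tensor_lift F t + tensor_lift F t'"
      using tensor_lift_sum[OF S, of t] tensor_lift_sum[OF S, of t'] by auto
    finally show ?thesis .
  qed
  moreover have "tensor_lift F (sT c t) = sW c (tensor_lift F t)" for c t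
  proof -
    have "tensor_lift F (sT c t) = (\<Sum>b\<in>{b. coords t b \<noteq> 0}. F b (coords (sT c t) b))"
      by (rule tensor_lift_sum[OF finite_coords]) (auto simp: coords_scale)
    also have "\<dots> = sW c (tensor_lift F t)"
      by (simp add: coords_scale F_right.scale W.scale_sum_right tensor_lift_def)
    finally show ?thesis .
  qed
  ultimately show ?thesis
    unfolding Vector_Spaces.linear_iff using T.vector_space_axioms W.vector_space_axioms by blast
qed

lemma tensor_lift_tp: "tensor_lift F (tp u v) = F u v"
proof -
  let ?r = "U.representation U_basis u"
  have "{b. coords (tp u v) b \<noteq> 0} \<subseteq> {b. ?r b \<noteq> 0}"
    by (auto simp: coords_tp)
  then have "tensor_lift F (tp u v) = (\<Sum>b\<in>{b. ?r b \<noteq> 0}. F (sU (?r b) b) v)"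
    by (simp add: tensor_lift_sum[OF U.finite_representation] coords_tp F_right.scale F_left.scale)
  also have "\<dots> = F u v"
    using U.sum_nonzero_representation_eq[OF independent_U_basis] span_U_basis
    by (simp flip: F_left.sum)
  finally show ?thesis .
qed

end

lemma linear_eq_on_tp:
  assumes "Vector_Spaces.linear sT sW h" "Vector_Spaces.linear sT sW h'"
    and "\<And>u v. h (tp u v) = h' (tp u v)"
  shows "h = h'"
proof
  fix t
  interpret vector_space_pair sT sW
    using assms(1) unfolding Vector_Spaces.linear_iff vector_space_pair_def by blast
  show "h t = h' t"
    by (rule linear_eq_on[OF assms(1,2)]) (use span_tp assms(3) in auto)
qed

lemma
  assumes "bilinear_map sU sV sW F"
  shows linear_tlin: "Vector_Spaces.linear sT sW (tlin sT sW tp F)"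
    and tlin_tp: "tlin sT sW tp F (tp u v) = F u v"
proof -
  have "\<exists>!h. Vector_Spaces.linear sT sW h \<and> (\<forall>u v. h (tp u v) = F u v)"
    using linear_eq_on_tp linear_tensor_lift[OF assms] tensor_lift_tp[OF assms] by metis
  then have "Vector_Spaces.linear sT sW (tlin sT sW tp F) \<and> (\<forall>u v. tlin sT sW tp F (tp u v) = F u v)"
    unfolding tlin_def by (rule theI')
  then show "Vector_Spaces.linear sT sW (tlin sT sW tp F)" "tlin sT sW tp F (tp u v) = F u v"
    by auto
qed

end

section \<open>Tensor products of algebras\<close>

locale tensor_product_algebra = tensor_product sU sV sT tp
  for sU :: "complex \<Rightarrow> 'u::ring \<Rightarrow> 'u" and sV :: "complex \<Rightarrow> 'v::ring \<Rightarrow> 'v"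
    and sT :: "complex \<Rightarrow> 't::ring \<Rightarrow> 't" and tp :: "'u \<Rightarrow> 'v \<Rightarrow> 't" +
  assumes complex_algebra_U: "complex_algebra sU"
    and complex_algebra_T: "complex_algebra sT"
    and tp_mult: "tp a b * tp c d = tp (a * c) (b * d)"
begin

lemma scale_mult_U: "sU c (x * y) = sU c x * y" "sU c (x * y) = x * sU c y"
  and scale_mult_T: "sT c (s * t) = sT c s * t" "sT c (s * t) = s * sT c t"
  using complex_algebra_U complex_algebra_T unfolding complex_algebra_def by auto

lemma sum_tp_mult_eq_0:
  assumes S: "finite S" "U.independent S"
    and nondeg: "\<And>a::'u. (\<And>b. a * b = 0) \<Longrightarrow> a = 0"
    and sum: "\<And>c. (\<Sum>b\<in>S. tp (b * c) (z b)) = 0" and b: "b \<in> S"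
  shows "z b = 0"
proof -
  let ?r = "\<lambda>b. V.representation V_basis (z b)"
  define K where "K = (\<Union>b\<in>S. {e. ?r b e \<noteq> 0})"
  have "K \<subseteq> V_basis"
    unfolding K_def using V.representation_ne_zero by blast
  then have K: "finite K" "V.independent K"
    using V.independent_mono[OF independent_V_basis]
    unfolding K_def using S(1) V.finite_representation by auto
  have z: "z b = (\<Sum>e\<in>K. sV (?r b e) e)" if "b \<in> S" for b
    by (rule V.sum_representation_superset[symmetric])
       (use that K in \<open>auto simp: K_def independent_V_basis span_V_basis\<close>)
  have sum_K: "(\<Sum>e\<in>K. tp ((\<Sum>b\<in>S. sU (?r b e) b) * c) e) = 0" for c
  proof -
    have "tp (b * c) (z b) = (\<Sum>e\<in>K. tp (sU (?r b e) (b * c)) e)" if "b \<in> S" for b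
      by (subst z[OF that]) (simp add: tp_sum_right tp_scale_left tp_scale_right)
    then have "0 = (\<Sum>b\<in>S. \<Sum>e\<in>K. tp (sU (?r b e) (b * c)) e)"
      using sum[of c] by simp
    also have "\<dots> = (\<Sum>e\<in>K. tp ((\<Sum>b\<in>S. sU (?r b e) b) * c) e)"
      by (simp add: sum.swap[of _ S] tp_sum_left sum_distrib_right scale_mult_U)
    finally show ?thesis
      by simp
  qed
  have coeffs: "(\<Sum>b\<in>S. sU (?r b e) b) = 0" if "e \<in> K" for e
    using sum_tp_eq_0_right[OF K sum_K that] by (rule nondeg)
  have "?r b e = 0" if "e \<in> K" for e
    using U.independentD[OF S(2) S(1) order_refl coeffs[OF that] b] .
  then show ?thesis
    using z[OF b] by simp
qed

lemma tensor_left_nondegenerate: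
  fixes w :: 't
  assumes nondeg_U: "\<And>a::'u. (\<And>b. a * b = 0) \<Longrightarrow> a = 0"
    and nondeg_V: "\<And>a::'v. (\<And>b. a * b = 0) \<Longrightarrow> a = 0"
    and w: "\<And>t. w * t = 0"
  shows "w = 0"
proof -
  let ?S = "{b. coords w b \<noteq> 0}"
  have w_sum: "w = (\<Sum>b\<in>?S. tp b (coords w b))"
    using has_coords_sum[OF has_coords_coords finite_coords order_refl] .
  have S: "finite ?S" "U.independent ?S"
    using has_coords_coords U.independent_mono[OF independent_U_basis] unfolding has_coords_def
    by auto
  have "coords w b * d = 0" if "b \<in> ?S" for b d
  proof (rule sum_tp_mult_eq_0[OF S nondeg_U _ that])
    show "(\<Sum>b\<in>?S. tp (b * c) (coords w b * d)) = 0" for c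
      using w[of "tp c d"] by (subst (asm) w_sum) (simp add: sum_distrib_right tp_mult)
  qed
  then have "?S = {}"
    using nondeg_V by blast
  then show ?thesis
    using w_sum by simp
qed

lemma linear_mult_left: "Vector_Spaces.linear sT sT (\<lambda>t. s * t)"
  and linear_mult_right: "Vector_Spaces.linear sT sT (\<lambda>t. t * s)"
  unfolding Vector_Spaces.linear_iff
  using T.vector_space_axioms by (simp_all add: distrib_left distrib_right flip: scale_mult_T)

lemma linear_compose_fun:
  "Vector_Spaces.linear sT sT f \<Longrightarrow> Vector_Spaces.linear sT sT g \<Longrightarrow> Vector_Spaces.linear sT sT (\<lambda>t. f (g t))"
  using Vector_Spaces.linear_compose[of sT sT g sT f] by (simp add: o_def)

lemma linear_compose_mult:
  assumes "Vector_Spaces.linear sT sT f"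
  shows "Vector_Spaces.linear sT sT (\<lambda>s. f (s * t))" "Vector_Spaces.linear sT sT (\<lambda>s. f (t * s))"
    and "Vector_Spaces.linear sT sT (\<lambda>s. f s * t)" "Vector_Spaces.linear sT sT (\<lambda>s. t * f s)"
  using linear_compose_fun[OF assms linear_mult_right] linear_compose_fun[OF assms linear_mult_left]
    linear_compose_fun[OF linear_mult_right assms] linear_compose_fun[OF linear_mult_left assms]
  by simp_all

lemma tensor_eqI:
  assumes "Vector_Spaces.linear sT sT f" "Vector_Spaces.linear sT sT g"
    and "\<And>u v. f (tp u v) = g (tp u v)"
  shows "f t = g t"
  using linear_eq_on_tp[OF assms] by simp

lemma tensor_eqI2:
  assumes "\<And>t. Vector_Spaces.linear sT sT (\<lambda>s. f s t)" "\<And>s. Vector_Spaces.linear sT sT (f s)"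
    and "\<And>t. Vector_Spaces.linear sT sT (\<lambda>s. g s t)" "\<And>s. Vector_Spaces.linear sT sT (g s)"
    and "\<And>u v u' v'. f (tp u v) (tp u' v') = g (tp u v) (tp u' v')"
  shows "f s t = g s t"
proof -
  have on_tp: "f (tp u v) t = g (tp u v) t" for u v
    by (rule tensor_eqI[where f="f (tp u v)"]) (use assms in auto)
  show ?thesis
    by (rule tensor_eqI[where f="\<lambda>s. f s t" and g="\<lambda>s. g s t"]) (use assms on_tp in auto)
qed

end

section \<open>Multipliers\<close>

lemma is_multiplierD:
  assumes "is_multiplier sT m"
  shows "fst m (b * c) = fst m b * c" "snd m (b * c) = b * snd m c" "b * fst m c = snd m b * c"
  using assms unfolding is_multiplier_def by blast+

lemma membed_melem:
  fixes m :: "'a::ring mult"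
  assumes nondeg: "\<And>a::'a. (\<And>b. a * b = 0) \<Longrightarrow> a = 0" and m: "m \<in> range membed"
  shows "membed (melem m) = m"
proof -
  obtain w where w: "membed w = m"
    using m by blast
  have "w' = w" if "membed w' = m" for w'
  proof -
    have "fst (membed w') = fst (membed w)"
      using that w by simp
    then have "(w' - w) * c = 0" for c
      by (simp add: membed_def fun_eq_iff left_diff_distrib)
    then show ?thesis
      using nondeg by fastforce
  qed
  then have "melem m = w"
    unfolding melem_def using w by blast
  then show ?thesis
    using w by simp
qed

locale tensor_square_algebra = tensor_product_algebra sA sA sT tp
  for sA :: "complex \<Rightarrow> 'a::ring \<Rightarrow> 'a" and sT :: "complex \<Rightarrow> 't::ring \<Rightarrow> 't" and tp
begin

abbreviation "lmul_ten_one a \<equiv> fst (ten_one sT tp a)"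
abbreviation "rmul_ten_one a \<equiv> snd (ten_one sT tp a)"
abbreviation "lmul_one_ten a \<equiv> fst (one_ten sT tp a)"
abbreviation "rmul_one_ten a \<equiv> snd (one_ten sT tp a)"
abbreviation "\<tau> \<equiv> flip sT tp"

lemma bilinear_mapI_tensor:
  assumes "\<And>u u' v. F (u + u') v = F u v + F u' v" "\<And>u v v'. F u (v + v') = F u v + F u v'"
    and "\<And>c u v. F (sA c u) v = sT c (F u v)" "\<And>c u v. F u (sA c v) = sT c (F u v)"
  shows "bilinear_map sA sA sT F"
  by (rule bilinear_mapI) (use assms U.vector_space_axioms T.vector_space_axioms in auto)

lemmas tensor_bilinear_simps = tp_add_left tp_add_right tp_scale_left tp_scale_right
  distrib_left distrib_right scale_mult_U[symmetric]

lemma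
  shows linear_lmul_ten_one: "Vector_Spaces.linear sT sT (lmul_ten_one a)"
    and linear_rmul_ten_one: "Vector_Spaces.linear sT sT (rmul_ten_one a)"
    and lmul_ten_one_tp: "lmul_ten_one a (tp u v) = tp (a * u) v"
    and rmul_ten_one_tp: "rmul_ten_one a (tp u v) = tp (u * a) v"
  unfolding ten_one_def fst_conv snd_conv
  by (simp_all add: linear_tlin tlin_tp bilinear_mapI_tensor tensor_bilinear_simps)

lemma
  shows linear_lmul_one_ten: "Vector_Spaces.linear sT sT (lmul_one_ten a)"
    and linear_rmul_one_ten: "Vector_Spaces.linear sT sT (rmul_one_ten a)"
    and lmul_one_ten_tp: "lmul_one_ten a (tp u v) = tp u (a * v)"
    and rmul_one_ten_tp: "rmul_one_ten a (tp u v) = tp u (v * a)"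
  unfolding one_ten_def fst_conv snd_conv
  by (simp_all add: linear_tlin tlin_tp bilinear_mapI_tensor tensor_bilinear_simps)

lemma linear_flip: "Vector_Spaces.linear sT sT \<tau>"
  and flip_tp: "\<tau> (tp u v) = tp v u"
  unfolding flip_def by (simp_all add: linear_tlin tlin_tp bilinear_mapI_tensor tensor_bilinear_simps)

lemma commutator_add: "commutator x (u + u') = commutator x u + commutator x u'"
  and commutator_scale: "commutator x (sA c u) = sA c (commutator x u)"
  unfolding commutator_def
  by (simp_all add: distrib_left distrib_right U.scale_right_diff_distrib flip: scale_mult_U)

lemma linear_dot_act: "Vector_Spaces.linear sT sT (dot_act sT tp x)"
  and dot_act_tp: "dot_act sT tp x (tp u v) = tp (commutator x u) v + tp u (commutator x v)"
  unfolding dot_act_def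
  by (simp_all add: linear_tlin tlin_tp bilinear_mapI_tensor commutator_add commutator_scale
      tp_add_left tp_add_right tp_scale_left tp_scale_right T.scale_right_distrib add_ac)

lemmas linear_tensor_ops = linear_lmul_ten_one linear_rmul_ten_one linear_lmul_one_ten
  linear_rmul_one_ten linear_flip linear_dot_act linear_mult_left linear_mult_right

lemmas tensor_ops_tp = lmul_ten_one_tp rmul_ten_one_tp lmul_one_ten_tp rmul_one_ten_tp flip_tp
  dot_act_tp tp_mult

lemmas tensor_ops_simps = linear_compose_mult linear_tensor_ops tensor_ops_tp mult.assoc

lemma ten_one_multiplier: "is_multiplier sT (ten_one sT tp a)"
  unfolding is_multiplier_def
proof (intro conjI allI linear_tensor_ops)
  fix s t
  show "lmul_ten_one a (s * t) = lmul_ten_one a s * t"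
    by (rule tensor_eqI2[where f="\<lambda>s t. lmul_ten_one a (s * t)" and g="\<lambda>s t. lmul_ten_one a s * t"])
       (simp_all add: tensor_ops_simps)
  show "rmul_ten_one a (s * t) = s * rmul_ten_one a t"
    by (rule tensor_eqI2[where f="\<lambda>s t. rmul_ten_one a (s * t)" and g="\<lambda>s t. s * rmul_ten_one a t"])
       (simp_all add: tensor_ops_simps)
  show "s * lmul_ten_one a t = rmul_ten_one a s * t"
    by (rule tensor_eqI2[where f="\<lambda>s t. s * lmul_ten_one a t" and g="\<lambda>s t. rmul_ten_one a s * t"])
       (simp_all add: tensor_ops_simps)
qed

lemma one_ten_multiplier: "is_multiplier sT (one_ten sT tp a)"
  unfolding is_multiplier_def
proof (intro conjI allI linear_tensor_ops)
  fix s t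
  show "lmul_one_ten a (s * t) = lmul_one_ten a s * t"
    by (rule tensor_eqI2[where f="\<lambda>s t. lmul_one_ten a (s * t)" and g="\<lambda>s t. lmul_one_ten a s * t"])
       (simp_all add: tensor_ops_simps)
  show "rmul_one_ten a (s * t) = s * rmul_one_ten a t"
    by (rule tensor_eqI2[where f="\<lambda>s t. rmul_one_ten a (s * t)" and g="\<lambda>s t. s * rmul_one_ten a t"])
       (simp_all add: tensor_ops_simps)
  show "s * lmul_one_ten a t = rmul_one_ten a s * t"
    by (rule tensor_eqI2[where f="\<lambda>s t. s * lmul_one_ten a t" and g="\<lambda>s t. rmul_one_ten a s * t"])
       (simp_all add: tensor_ops_simps)
qed

lemma flip_lmul_ten_one: "\<tau> (lmul_ten_one a t) = lmul_one_ten a (\<tau> t)"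
  by (rule tensor_eqI[OF linear_compose_fun[OF linear_flip linear_lmul_ten_one]
        linear_compose_fun[OF linear_lmul_one_ten linear_flip]])
     (simp add: tensor_ops_tp)

lemma flip_rmul_ten_one: "\<tau> (rmul_ten_one a t) = rmul_one_ten a (\<tau> t)"
  by (rule tensor_eqI[OF linear_compose_fun[OF linear_flip linear_rmul_ten_one]
        linear_compose_fun[OF linear_rmul_one_ten linear_flip]])
     (simp add: tensor_ops_tp)

lemma flip_lmul_one_ten: "\<tau> (lmul_one_ten a t) = lmul_ten_one a (\<tau> t)"
  by (rule tensor_eqI[OF linear_compose_fun[OF linear_flip linear_lmul_one_ten]
        linear_compose_fun[OF linear_lmul_ten_one linear_flip]])
     (simp add: tensor_ops_tp)

lemma flip_rmul_one_ten: "\<tau> (rmul_one_ten a t) = rmul_ten_one a (\<tau> t)"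
  by (rule tensor_eqI[OF linear_compose_fun[OF linear_flip linear_rmul_one_ten]
        linear_compose_fun[OF linear_rmul_ten_one linear_flip]])
     (simp add: tensor_ops_tp)

lemma dot_act_eq:
  "dot_act sT tp x t = lmul_ten_one x t - rmul_ten_one x t + lmul_one_ten x t - rmul_one_ten x t"
  by (rule tensor_eqI[where f="dot_act sT tp x"])
     (simp_all add: TT.linear_compose_add TT.linear_compose_sub linear_tensor_ops tensor_ops_tp
       commutator_def tp_diff_left tp_diff_right)

lemma lmul_ten_one_mult: "lmul_ten_one (a * x) t = lmul_ten_one a (lmul_ten_one x t)"
  by (rule tensor_eqI[OF linear_lmul_ten_one linear_compose_fun[OF linear_lmul_ten_one linear_lmul_ten_one]])
     (simp add: tensor_ops_tp mult.assoc)

lemma lmul_one_ten_mult: "lmul_one_ten (x * a) t = lmul_one_ten x (lmul_one_ten a t)"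
  by (rule tensor_eqI[OF linear_lmul_one_ten linear_compose_fun[OF linear_lmul_one_ten linear_lmul_one_ten]])
     (simp add: tensor_ops_tp mult.assoc)

lemma lmul_one_ten_lmul_ten_one:
  "lmul_one_ten y (lmul_ten_one x t) = lmul_ten_one x (lmul_one_ten y t)"
  by (rule tensor_eqI[OF linear_compose_fun[OF linear_lmul_one_ten linear_lmul_ten_one]
        linear_compose_fun[OF linear_lmul_ten_one linear_lmul_one_ten]])
     (simp add: tensor_ops_tp)

lemma linear_lmul_ten_one_param: "Vector_Spaces.linear sA sT (\<lambda>a. lmul_ten_one a t)"
proof -
  have "lmul_ten_one (a + b) t = lmul_ten_one a t + lmul_ten_one b t" for a b
    by (rule tensor_eqI[OF linear_lmul_ten_one TT.linear_compose_add[OF linear_lmul_ten_one linear_lmul_ten_one]])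
       (simp add: tensor_ops_tp distrib_right tp_add_left)
  moreover have "lmul_ten_one (sA c a) t = sT c (lmul_ten_one a t)" for c a
    by (rule tensor_eqI[OF linear_lmul_ten_one TT.linear_compose_scale_right[OF linear_lmul_ten_one]])
       (simp add: tensor_ops_tp tp_scale_left flip: scale_mult_U)
  ultimately show ?thesis
    unfolding Vector_Spaces.linear_iff using U.vector_space_axioms T.vector_space_axioms by blast
qed

lemma linear_rmul_ten_one_param: "Vector_Spaces.linear sA sT (\<lambda>a. rmul_ten_one a t)"
proof -
  have "rmul_ten_one (a + b) t = rmul_ten_one a t + rmul_ten_one b t" for a b
    by (rule tensor_eqI[OF linear_rmul_ten_one TT.linear_compose_add[OF linear_rmul_ten_one linear_rmul_ten_one]])
       (simp add: tensor_ops_tp distrib_left tp_add_left)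
  moreover have "rmul_ten_one (sA c a) t = sT c (rmul_ten_one a t)" for c a
    by (rule tensor_eqI[OF linear_rmul_ten_one TT.linear_compose_scale_right[OF linear_rmul_ten_one]])
       (simp add: tensor_ops_tp tp_scale_left flip: scale_mult_U)
  ultimately show ?thesis
    unfolding Vector_Spaces.linear_iff using U.vector_space_axioms T.vector_space_axioms by blast
qed

lemma linear_lmul_one_ten_param: "Vector_Spaces.linear sA sT (\<lambda>a. lmul_one_ten a t)"
proof -
  have "lmul_one_ten (a + b) t = lmul_one_ten a t + lmul_one_ten b t" for a b
    by (rule tensor_eqI[OF linear_lmul_one_ten TT.linear_compose_add[OF linear_lmul_one_ten linear_lmul_one_ten]])
       (simp add: tensor_ops_tp distrib_right tp_add_right)
  moreover have "lmul_one_ten (sA c a) t = sT c (lmul_one_ten a t)" for c a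
    by (rule tensor_eqI[OF linear_lmul_one_ten TT.linear_compose_scale_right[OF linear_lmul_one_ten]])
       (simp add: tensor_ops_tp tp_scale_right flip: scale_mult_U)
  ultimately show ?thesis
    unfolding Vector_Spaces.linear_iff using U.vector_space_axioms T.vector_space_axioms by blast
qed

definition balancer :: "'a \<Rightarrow> 't \<Rightarrow> 'a \<Rightarrow> 't \<Rightarrow> 't" where
  "balancer x Q y P =
     lmul_ten_one x (\<tau> Q) - rmul_one_ten x (\<tau> Q) + lmul_one_ten y P - rmul_ten_one y P"

lemma flip_antisym_derivation_commutator:
  assumes derivation: "\<And>x y. D (x * y) = rmul_one_ten y (D x) + lmul_ten_one x (D y)"
    and diff: "\<And>x y. D (x - y) = D x - D y"
  shows "D (commutator x y) - \<tau> (D (commutator x y)) =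
    dot_act sT tp x (D y - \<tau> (D y)) - dot_act sT tp y (D x - \<tau> (D x))
    + balancer x (D y) y (D x) - balancer y (D x) x (D y)"
  unfolding commutator_def diff derivation balancer_def dot_act_eq
  by (simp add: TT.linear_add[OF linear_flip] TT.linear_diff[OF linear_flip]
      TT.linear_diff[OF linear_lmul_ten_one] TT.linear_diff[OF linear_rmul_ten_one]
      TT.linear_diff[OF linear_lmul_one_ten] TT.linear_diff[OF linear_rmul_one_ten]
      flip_lmul_ten_one flip_rmul_ten_one flip_lmul_one_ten flip_rmul_one_ten algebra_simps)

end

section \<open>Infinitesimal multiplier bialgebras\<close>

locale infinitesimal_multiplier_bialgebra =
  fixes sA :: "complex \<Rightarrow> 'a::ring \<Rightarrow> 'a" and sT :: "complex \<Rightarrow> 't::ring \<Rightarrow> 't"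
    and sS :: "complex \<Rightarrow> 's::ab_group_add \<Rightarrow> 's"
    and tp :: "'a \<Rightarrow> 'a \<Rightarrow> 't" and tp3 :: "'t \<Rightarrow> 'a \<Rightarrow> 's" and \<Delta> :: "'a \<Rightarrow> 't mult"
  assumes inf_mult_bialgebra: "inf_mult_bialgebra sA sT sS tp tp3 \<Delta>"

sublocale infinitesimal_multiplier_bialgebra \<subseteq> tensor_square_algebra sA sT tp
  using inf_mult_bialgebra
  unfolding inf_mult_bialgebra_def tensor_square_algebra_def tensor_product_algebra_def
    tensor_product_algebra_axioms_def tensor_product_def
  by blast

context infinitesimal_multiplier_bialgebra
begin

abbreviation "DR x a \<equiv> DeltaR sT tp \<Delta> x a"
abbreviation "DL a x \<equiv> DeltaL sT tp \<Delta> a x"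

lemma nondegenerate_A:
  fixes a :: 'a
  assumes "\<And>b. a * b = 0"
  shows "a = 0"
  using assms inf_mult_bialgebra unfolding inf_mult_bialgebra_def nondegenerate_product_def by blast

lemma tensor_eq_by_mult:
  fixes p q :: 't
  assumes "\<And>t. p * t = q * t"
  shows "p = q"
  using tensor_left_nondegenerate[OF nondegenerate_A nondegenerate_A, of "p - q"] assms
  by (simp add: left_diff_distrib)

lemma coproduct: "is_coproduct sA sT sS tp tp3 \<Delta>"
  using inf_mult_bialgebra unfolding inf_mult_bialgebra_def by blast

lemma linear_Delta: "Vector_Spaces.linear sT sT (fst (\<Delta> x))"
  using coproduct unfolding is_coproduct_def is_multiplier_def by blast

lemma linear_Delta_arg: "Vector_Spaces.linear sA sT (\<lambda>x. fst (\<Delta> x) t)"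
proof -
  have lin: "fst (\<Delta> (sA c x + y)) t = sT c (fst (\<Delta> x) t) + fst (\<Delta> y) t" for c x y
    using coproduct unfolding is_coproduct_def by simp
  have zero: "fst (\<Delta> 0) t = 0"
    using lin[of 1 0 0] by simp
  show ?thesis
    unfolding Vector_Spaces.linear_iff
    using lin[of 1] lin[of _ _ 0] U.vector_space_axioms T.vector_space_axioms by (simp add: zero)
qed

lemma Delta_mult:
  "fst (\<Delta> (x * y)) t = fst (\<Delta> x) (lmul_one_ten y t) + lmul_ten_one x (fst (\<Delta> y) t)"
  using inf_mult_bialgebra unfolding inf_mult_bialgebra_def by (simp add: madd_def mprod_def)

lemma tensor_membed_melem:
  fixes m :: "'t mult"
  shows "m \<in> range membed \<Longrightarrow> membed (melem m) = m"
  by (rule membed_melem[OF tensor_left_nondegenerate[OF nondegenerate_A nondegenerate_A]])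

lemma DeltaR_mult: "DR x a * t = fst (\<Delta> x) (lmul_ten_one a t)"
proof -
  have "membed (DR x a) = mprod (\<Delta> x) (ten_one sT tp a)"
    using tensor_membed_melem coproduct unfolding DeltaR_def is_coproduct_def by blast
  then show ?thesis
    by (metis comp_apply fst_conv membed_def mprod_def)
qed

lemma DeltaL_mult: "DL a x * t = lmul_one_ten a (fst (\<Delta> x) t)"
proof -
  have "membed (DL a x) = mprod (one_ten sT tp a) (\<Delta> x)"
    using tensor_membed_melem coproduct unfolding DeltaL_def is_coproduct_def by blast
  then show ?thesis
    by (metis comp_apply fst_conv membed_def mprod_def)
qed

lemmas Delta_arg_add = UT.linear_add[OF linear_Delta_arg]
  and Delta_arg_scale = UT.linear_scale[OF linear_Delta_arg]
  and Delta_add = TT.linear_add[OF linear_Delta]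

lemma linear_DeltaR_left: "Vector_Spaces.linear sA sT (\<lambda>x. DR x a)"
proof -
  have "DR (x + y) a = DR x a + DR y a" for x y
    by (rule tensor_eq_by_mult) (simp add: DeltaR_mult distrib_right Delta_arg_add)
  moreover have "DR (sA c x) a = sT c (DR x a)" for c x
    by (rule tensor_eq_by_mult) (simp add: DeltaR_mult Delta_arg_scale flip: scale_mult_T)
  ultimately show ?thesis
    unfolding Vector_Spaces.linear_iff using U.vector_space_axioms T.vector_space_axioms by blast
qed

lemma linear_DeltaR_right: "Vector_Spaces.linear sA sT (DR x)"
proof -
  have "DR x (a + b) = DR x a + DR x b" for a b
    by (rule tensor_eq_by_mult)
       (simp add: DeltaR_mult distrib_right UT.linear_add[OF linear_lmul_ten_one_param] Delta_add)
  moreover have "DR x (sA c a) = sT c (DR x a)" for c a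
    by (rule tensor_eq_by_mult)
       (simp add: DeltaR_mult UT.linear_scale[OF linear_lmul_ten_one_param]
         TT.linear_scale[OF linear_Delta] flip: scale_mult_T)
  ultimately show ?thesis
    unfolding Vector_Spaces.linear_iff using U.vector_space_axioms T.vector_space_axioms by blast
qed

lemma DeltaR_derivation: "DR (x * y) a = rmul_one_ten y (DR x a) + lmul_ten_one x (DR y a)"
  by (rule tensor_eq_by_mult)
     (simp add: DeltaR_mult Delta_mult distrib_right lmul_one_ten_lmul_ten_one
       flip: is_multiplierD(1)[OF ten_one_multiplier] is_multiplierD(3)[OF one_ten_multiplier])

lemma DeltaR_mult_param: "DR y (a * x) = rmul_ten_one x (DR y a)"
  by (rule tensor_eq_by_mult)
     (simp add: DeltaR_mult lmul_ten_one_mult flip: is_multiplierD(3)[OF ten_one_multiplier])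

lemma linear_DeltaL_left: "Vector_Spaces.linear sA sT (\<lambda>a. DL a x)"
proof -
  have "DL (a + b) x = DL a x + DL b x" for a b
    by (rule tensor_eq_by_mult)
       (simp add: DeltaL_mult distrib_right UT.linear_add[OF linear_lmul_one_ten_param])
  moreover have "DL (sA c a) x = sT c (DL a x)" for c a
    by (rule tensor_eq_by_mult)
       (simp add: DeltaL_mult UT.linear_scale[OF linear_lmul_one_ten_param] flip: scale_mult_T)
  ultimately show ?thesis
    unfolding Vector_Spaces.linear_iff using U.vector_space_axioms T.vector_space_axioms by blast
qed

lemma linear_DeltaL_right: "Vector_Spaces.linear sA sT (DL a)"
proof -
  have "DL a (x + y) = DL a x + DL a y" for x y
    by (rule tensor_eq_by_mult)
       (simp add: DeltaL_mult distrib_right Delta_arg_add TT.linear_add[OF linear_lmul_one_ten])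
  moreover have "DL a (sA c x) = sT c (DL a x)" for c x
    by (rule tensor_eq_by_mult)
       (simp add: DeltaL_mult Delta_arg_scale TT.linear_scale[OF linear_lmul_one_ten]
         flip: scale_mult_T)
  ultimately show ?thesis
    unfolding Vector_Spaces.linear_iff using U.vector_space_axioms T.vector_space_axioms by blast
qed

lemma DeltaL_derivation: "DL a (x * y) = rmul_one_ten y (DL a x) + lmul_ten_one x (DL a y)"
  by (rule tensor_eq_by_mult)
     (simp add: DeltaL_mult Delta_mult distrib_right lmul_one_ten_lmul_ten_one
       TT.linear_add[OF linear_lmul_one_ten]
       flip: is_multiplierD(1)[OF ten_one_multiplier] is_multiplierD(3)[OF one_ten_multiplier])

lemma DeltaL_mult_param: "DL (x * a) y = lmul_one_ten x (DL a y)"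
  by (rule tensor_eq_by_mult)
     (simp add: DeltaL_mult lmul_one_ten_mult flip: is_multiplierD(1)[OF one_ten_multiplier])

lemmas bibalanceator_simps =
  UT.linear_add[OF linear_lmul_ten_one_param] UT.linear_scale[OF linear_lmul_ten_one_param]
  UT.linear_add[OF linear_rmul_ten_one_param] UT.linear_scale[OF linear_rmul_ten_one_param]
  UT.linear_add[OF linear_lmul_one_ten_param] UT.linear_scale[OF linear_lmul_one_ten_param]
  UT.linear_add[OF linear_DeltaR_left] UT.linear_scale[OF linear_DeltaR_left]
  UT.linear_add[OF linear_DeltaR_right] UT.linear_scale[OF linear_DeltaR_right]
  UT.linear_add[OF linear_DeltaL_left] UT.linear_scale[OF linear_DeltaL_left]
  UT.linear_add[OF linear_DeltaL_right] UT.linear_scale[OF linear_DeltaL_right]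
  TT.linear_add[OF linear_flip] TT.linear_scale[OF linear_flip]
  TT.linear_add[OF linear_lmul_ten_one] TT.linear_scale[OF linear_lmul_ten_one]
  TT.linear_add[OF linear_rmul_ten_one] TT.linear_scale[OF linear_rmul_ten_one]
  TT.linear_add[OF linear_lmul_one_ten] TT.linear_scale[OF linear_lmul_one_ten]
  distrib_left distrib_right T.scale_right_distrib T.scale_right_diff_distrib

lemma bibal_under_tp: "bibal_under sT tp \<Delta> a (tp x y) = balancer x (DR y a) y (DR x a)"
proof -
  have "bilinear_map sA sA sT (\<lambda>x y. lmul_ten_one x (\<tau> (DR y a)) - \<tau> (DR y (a * x))
      + lmul_one_ten y (DR x a) - DR x (a * y))"
    by (rule bilinear_mapI_tensor) (simp_all add: bibalanceator_simps algebra_simps flip: scale_mult_U)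
  then show ?thesis
    unfolding bibal_under_def balancer_def by (simp add: tlin_tp DeltaR_mult_param flip_rmul_ten_one)
qed

lemma bibal_over_tp: "bibal_over sT tp \<Delta> a (tp x y) = balancer x (DL a y) y (DL a x)"
proof -
  have "bilinear_map sA sA sT (\<lambda>x y. \<tau> (DL (x * a) y) - \<tau> (rmul_ten_one x (DL a y))
      + DL (y * a) x - rmul_ten_one y (DL a x))"
    by (rule bilinear_mapI_tensor) (simp_all add: bibalanceator_simps algebra_simps flip: scale_mult_U)
  then show ?thesis
    unfolding bibal_over_def balancer_def
    by (simp add: tlin_tp DeltaL_mult_param flip_rmul_ten_one flip_lmul_one_ten)
qed

end

theorem proposition3p2:
  fixes sA :: "complex \<Rightarrow> 'a::ring \<Rightarrow> 'a"
    and sT :: "complex \<Rightarrow> 't::ring \<Rightarrow> 't"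
    and sS :: "complex \<Rightarrow> 's::ab_group_add \<Rightarrow> 's"
    and tp :: "'a \<Rightarrow> 'a \<Rightarrow> 't"
    and tp3 :: "'t \<Rightarrow> 'a \<Rightarrow> 's"
    and \<Delta> :: "'a \<Rightarrow> 't mult"
  assumes "inf_mult_bialgebra sA sT sS tp tp3 \<Delta>"
  shows "\<forall>a x y.
     delta_map sT tp \<Delta> a (commutator x y) =
       dot_act sT tp x (delta_map sT tp \<Delta> a y) - dot_act sT tp y (delta_map sT tp \<Delta> a x)
       + bibal_under sT tp \<Delta> a (tp x y) - bibal_under sT tp \<Delta> a (tp y x)
   \<and> zeta_map sT tp \<Delta> a (commutator x y) =
       dot_act sT tp x (zeta_map sT tp \<Delta> a y) - dot_act sT tp y (zeta_map sT tp \<Delta> a x)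
       + bibal_over sT tp \<Delta> a (tp x y) - bibal_over sT tp \<Delta> a (tp y x)"
proof (intro allI conjI)
  interpret infinitesimal_multiplier_bialgebra sA sT sS tp tp3 \<Delta>
    by (rule infinitesimal_multiplier_bialgebra.intro) (fact assms)
  fix a x y
  show "delta_map sT tp \<Delta> a (commutator x y) =
       dot_act sT tp x (delta_map sT tp \<Delta> a y) - dot_act sT tp y (delta_map sT tp \<Delta> a x)
       + bibal_under sT tp \<Delta> a (tp x y) - bibal_under sT tp \<Delta> a (tp y x)"
    unfolding delta_map_def bibal_under_tp
    by (rule flip_antisym_derivation_commutator[where D="\<lambda>x. DR x a"])
       (simp_all add: DeltaR_derivation UT.linear_diff[OF linear_DeltaR_left])
  show "zeta_map sT tp \<Delta> a (commutator x y) =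
       dot_act sT tp x (zeta_map sT tp \<Delta> a y) - dot_act sT tp y (zeta_map sT tp \<Delta> a x)
       + bibal_over sT tp \<Delta> a (tp x y) - bibal_over sT tp \<Delta> a (tp y x)"
    unfolding zeta_map_def bibal_over_tp
    by (rule flip_antisym_derivation_commutator[where D="DL a"])
       (simp_all add: DeltaL_derivation UT.linear_diff[OF linear_DeltaL_right])
qed

end
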